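(* Let $G_4$ be the directed graph whose vertex set is $S_4$ (permutations in one-line notation $[u(1),u(2),u(3),u(4)]$), with a directed edge $\mathbf{u}\to\mathbf{v}$ if and only if $\max_{i\in\{1,2,3,4\}}\bigl(v^{-1}(i)-u^{-1}(i)\bigr)=1$. Let $g=(1,2,3,4)\in S_4$ (cycle notation) and $H=\langle g\rangle=\{[1,2,3,4],[2,3,4,1],[3,4,1,2],[4,1,2,3]\}$. Partition $S_4$ into the 6 cosets $\mathbf{h}H=\{\mathbf{h}\circ g^k : k=0,1,2,3\}$, where $(\mathbf{h}\circ g)(i)=h(g(i))$; concretely, the coset of $[a,b,c,d]$ is $\{[a,b,c,d],[b,c,d,a],[c,d,a,b],[d,a,b,c]\}$. Then each of these 6 sets is a dominating set of $G_4$, i.e., for each such set $D$, every vertex $\mathbf{u}\notin D$ has an edge $\mathbf{u}\to\mathbf{v}$ to some $\mathbf{v}\in D$.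
   Context: For a permutation $\mathbf{u}=[u(1),\dots,u(n)]$ in one-line notation, $u^{-1}(i)$ denotes the position of $i$ in the sequence. The quantity $\max_i(v^{-1}(i)-u^{-1}(i))$ is the rewriting cost of changing state $\mathbf{u}$ to state $\mathbf{v}$ via minimal-push-up operations. A set $D$ of vertices of a directed graph is a dominating set if every vertex not in $D$ is the initial vertex of an edge ending in a vertex of $D$. *)

theory Defs
  imports "HOL-Combinatorics.Permutations"
begin

text \<open>Permutations of S_4 are functions nat => nat permuting {1..4}; u i is the entry
  at position i (one-line notation), so inv u i is the position of i.\<close>

definition S4 :: "(nat \<Rightarrow> nat) set" where
  "S4 = {u. u permutes {1..4}}"

definition rewrite_cost :: "(nat \<Rightarrow> nat) \<Rightarrow> (nat \<Rightarrow> nat) \<Rightarrow> int" where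
  "rewrite_cost u v = Max ((\<lambda>i. int (inv v i) - int (inv u i)) ` {1..4})"

definition G4_edge :: "(nat \<Rightarrow> nat) \<Rightarrow> (nat \<Rightarrow> nat) \<Rightarrow> bool" where
  "G4_edge u v \<longleftrightarrow> u \<in> S4 \<and> v \<in> S4 \<and> rewrite_cost u v = 1"

definition dominating_set :: "'a set \<Rightarrow> ('a \<Rightarrow> 'a \<Rightarrow> bool) \<Rightarrow> 'a set \<Rightarrow> bool" where
  "dominating_set V E D \<longleftrightarrow> D \<subseteq> V \<and> (\<forall>u \<in> V - D. \<exists>v \<in> D. E u v)"

definition g4 :: "nat \<Rightarrow> nat" where
  "g4 i = (if i = 1 then 2 else if i = 2 then 3 else if i = 3 then 4 else if i = 4 then 1 else i)"

definition coset4 :: "(nat \<Rightarrow> nat) \<Rightarrow> (nat \<Rightarrow> nat) set" where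
  "coset4 h = {h \<circ> (g4 ^^ k) | k. k < 4}"

end

theory Submission
  imports Defs "HOL-Combinatorics.Multiset_Permutations"
begin

text \<open>Every vertex of \<open>G\<^sub>4\<close> is written in one-line notation as a list \<open>xs\<close>, the coset of \<open>h\<close>
  then consists of the four rotations of the list of \<open>h\<close>, and the rewriting cost becomes a
  maximum of differences of list positions. After this translation the theorem is a finite
  statement about the 24 permutation lists of \<open>[1,2,3,4]\<close>, which is checked by evaluation.\<close>

definition perm_of_list :: "nat list \<Rightarrow> nat \<Rightarrow> nat" where
  "perm_of_list xs i = (if i \<in> {1..length xs} then xs ! (i - 1) else i)"

fun index :: "'a list \<Rightarrow> 'a \<Rightarrow> nat" where
  "index [] x = 0"
| "index (y # ys) x = (if y = x then 0 else Suc (index ys x))"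

lemma index_less_length: "x \<in> set xs \<Longrightarrow> index xs x < length xs"
  by (induction xs) auto

lemma nth_index: "x \<in> set xs \<Longrightarrow> xs ! index xs x = x"
  by (induction xs) auto

definition list_cost :: "'a list \<Rightarrow> 'a list \<Rightarrow> int" where
  "list_cost ys zs = Max ((\<lambda>i. int (index zs i) - int (index ys i)) ` set ys)"

lemma perm_of_list_one_line:
  assumes "u permutes {1..n}"
  shows "perm_of_list (map u [1..<n+1]) = u"
proof
  fix i
  show "perm_of_list (map u [1..<n+1]) i = u i"
  proof (cases "i \<in> {1..n}")
    case True
    then have "map u [1..<n+1] ! (i - 1) = u (1 + (i - 1))"
      by (intro nth_map_upt) auto
    then show ?thesis
      using True by (simp add: perm_of_list_def del: upt_Suc)
  next
    case False
    then show ?thesis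
      using permutes_not_in[OF assms] by (auto simp: perm_of_list_def)
  qed
qed

lemma one_line_in_permutations_of_set:
  assumes "u permutes {1..n}"
  shows "map u [1..<n+1] \<in> permutations_of_set {1..n}"
proof
  show "set (map u [1..<n+1]) = {1..n}"
    using permutes_image[OF assms] by (simp add: atLeastLessThanSuc_atLeastAtMost del: upt_Suc)
  show "distinct (map u [1..<n+1])"
    using permutes_inj[OF assms] by (simp add: distinct_map inj_on_subset)
qed

lemma perm_of_list_permutes:
  assumes "xs \<in> permutations_of_set {1..length xs}"
  shows "perm_of_list xs permutes {1..length xs}"
proof (rule bij_imp_permutes)
  have "perm_of_list xs ` {1..length xs} = (\<lambda>j. xs ! j) ` {..<length xs}"
  proof -
    have "{1..length xs} = Suc ` {..<length xs}"
      by (simp add: atLeast0LessThan[symmetric] atLeastLessThanSuc_atLeastAtMost[symmetric])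
    then show ?thesis by (force simp: perm_of_list_def)
  qed
  also have "\<dots> = {1..length xs}"
    using permutations_of_setD(1)[OF assms] by (auto simp: set_conv_nth)
  finally have image: "perm_of_list xs ` {1..length xs} = {1..length xs}" .
  then show "bij_betw (perm_of_list xs) {1..length xs} {1..length xs}"
    by (simp add: bij_betw_def eq_card_imp_inj_on)
  show "perm_of_list xs i = i" if "i \<notin> {1..length xs}" for i
    using that by (auto simp: perm_of_list_def)
qed

lemma inv_perm_of_list:
  assumes "xs \<in> permutations_of_set {1..length xs}" and "i \<in> {1..length xs}"
  shows "inv (perm_of_list xs) i = index xs i + 1"
proof -
  have "i \<in> set xs"
    using assms by (simp add: permutations_of_set_def)
  then have "perm_of_list xs (index xs i + 1) = i"
    using index_less_length[of i xs] nth_index[of i xs] by (simp add: perm_of_list_def)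
  then show ?thesis
    by (simp add: permutes_inv_eq[OF perm_of_list_permutes[OF assms(1)]])
qed

lemma permutes_eq_image_perm_of_list:
  "{u. u permutes {1..n}} = perm_of_list ` permutations_of_set {1..n}"
proof (intro equalityI subsetI)
  fix u
  assume "u \<in> {u. u permutes {1..n}}"
  then show "u \<in> perm_of_list ` permutations_of_set {1..n}"
    using perm_of_list_one_line one_line_in_permutations_of_set by (metis image_eqI mem_Collect_eq)
next
  fix u
  assume "u \<in> perm_of_list ` permutations_of_set {1..n}"
  then obtain xs where "xs \<in> permutations_of_set {1..n}" "u = perm_of_list xs" by blast
  moreover from this have "length xs = n"
    by (simp add: length_finite_permutations_of_set)
  ultimately show "u \<in> {u. u permutes {1..n}}"
    using perm_of_list_permutes by blast
qed

lemma rewrite_cost_perm_of_list: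
  assumes "ys \<in> permutations_of_set {1..4}" and "zs \<in> permutations_of_set {1..4}"
  shows "rewrite_cost (perm_of_list ys) (perm_of_list zs) = list_cost ys zs"
proof -
  have "length ys = 4" "length zs = 4" "set ys = {1..4}"
    using assms by (simp_all add: length_finite_permutations_of_set permutations_of_set_def)
  then have "(\<lambda>i. int (inv (perm_of_list zs) i) - int (inv (perm_of_list ys) i)) ` {1..4}
      = (\<lambda>i. int (index zs i) - int (index ys i)) ` set ys"
    using assms by (intro image_cong) (simp_all add: inv_perm_of_list)
  then show ?thesis
    by (simp add: rewrite_cost_def list_cost_def)
qed

lemma g4_Suc_mod_4:
  assumes "m < 4"
  shows "g4 (Suc m) = Suc (Suc m mod 4)"
proof -
  from assms consider "m = 0" | "m = 1" | "m = 2" | "m = 3" by linarith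
  then show ?thesis by cases (simp_all add: g4_def)
qed

lemma g4_eq_self: "i \<notin> {1..4} \<Longrightarrow> g4 i = i"
  by (auto simp: g4_def)

lemma funpow_g4:
  "(g4 ^^ k) i = (if i \<in> {1..4} then (i - 1 + k) mod 4 + 1 else i)"
proof (induction k)
  case 0
  then show ?case by auto
next
  case (Suc k)
  show ?case
  proof (cases "i \<in> {1..4}")
    case True
    then have "(g4 ^^ Suc k) i = g4 ((i - 1 + k) mod 4 + 1)"
      using Suc.IH by simp
    also have "\<dots> = Suc ((i - 1 + k) mod 4) mod 4 + 1"
      using g4_Suc_mod_4[of "(i - 1 + k) mod 4"] by simp
    also have "\<dots> = (i - 1 + Suc k) mod 4 + 1"
      by (simp add: mod_Suc_eq)
    finally show ?thesis
      using True by simp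
  next
    case False
    then have "(g4 ^^ k) i = i"
      using Suc.IH by (simp only: False if_False)
    then show ?thesis
      by (simp only: funpow.simps(2) comp_apply False if_False g4_eq_self[OF False])
  qed
qed

lemma perm_of_list_comp_g4_pow:
  assumes "length xs = 4"
  shows "perm_of_list xs \<circ> g4 ^^ k = perm_of_list (rotate k xs)"
proof
  fix i
  show "(perm_of_list xs \<circ> g4 ^^ k) i = perm_of_list (rotate k xs) i"
    using assms by (auto simp: perm_of_list_def funpow_g4 nth_rotate add.commute)
qed

lemma coset4_perm_of_list:
  assumes "length xs = 4"
  shows "coset4 (perm_of_list xs) = (\<lambda>k. perm_of_list (rotate k xs)) ` {..<4}"
  using perm_of_list_comp_g4_pow[OF assms] by (auto simp: coset4_def)

lemma rotations_dominate_permutations_of_4: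
  fixes xs ys :: "nat list"
  assumes "xs \<in> permutations_of_set {1..4}" and "ys \<in> permutations_of_set {1..4}"
    and "\<forall>k<4. ys \<noteq> rotate k xs"
  shows "\<exists>k<4. list_cost ys (rotate k xs) = 1"
proof -
  have lists: "permutations_of_set {1..4::nat} = set (permutations_of_set_list [1, 2, 3, 4])"
    by code_simp
  have "\<forall>xs\<in>set (permutations_of_set_list [1, 2, 3, 4::nat]).
        \<forall>ys\<in>set (permutations_of_set_list [1, 2, 3, 4]).
          (\<exists>k\<in>set [0..<4]. ys = rotate k xs) \<or> (\<exists>k\<in>set [0..<4]. list_cost ys (rotate k xs) = 1)"
    unfolding list_cost_def by code_simp
  then have "(\<exists>k\<in>{0..<4}. ys = rotate k xs) \<or> (\<exists>k\<in>{0..<4}. list_cost ys (rotate k xs) = 1)"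
    using assms(1,2) unfolding lists set_upt by blast
  then show ?thesis
    using assms(3) by auto
qed

theorem theorem3:
  assumes "h \<in> S4"
  shows "dominating_set S4 G4_edge (coset4 h)"
proof -
  have S4: "S4 = perm_of_list ` permutations_of_set {1..4}"
    unfolding S4_def by (rule permutes_eq_image_perm_of_list)
  obtain xs where xs: "xs \<in> permutations_of_set {1..4}" and h: "h = perm_of_list xs"
    using assms S4 by blast
  have rotations: "rotate k xs \<in> permutations_of_set {1..4}" for k
    using xs by (simp add: permutations_of_set_def)
  have coset: "coset4 h = (\<lambda>k. perm_of_list (rotate k xs)) ` {..<4}"
    using h xs coset4_perm_of_list by (simp add: length_finite_permutations_of_set)
  have subset: "coset4 h \<subseteq> S4"
    using coset rotations S4 by auto
  moreover have "\<exists>v\<in>coset4 h. G4_edge u v" if u: "u \<in> S4 - coset4 h" for u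
  proof -
    obtain ys where ys: "ys \<in> permutations_of_set {1..4}" and u_eq: "u = perm_of_list ys"
      using u S4 by blast
    have "\<forall>k<4. ys \<noteq> rotate k xs"
      using u coset u_eq by auto
    then obtain k where k: "k < 4" "list_cost ys (rotate k xs) = 1"
      using rotations_dominate_permutations_of_4 xs ys by blast
    then have "G4_edge u (perm_of_list (rotate k xs))"
      using u subset coset rewrite_cost_perm_of_list[OF ys rotations] u_eq
      by (auto simp: G4_edge_def)
    then show ?thesis
      using coset k by blast
  qed
  ultimately show ?thesis
    by (simp add: dominating_set_def)
qed

end
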